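(* Let $m\ge 2$ and $n\ge1$ be integers with $m(n-1)$ even, let ${\bf h}\in\mathbb{R}^{m(n-1)+1}$, let $\mathcal{H}$ be the $m^{\rm th}$-order $n$-dimensional Hankel tensor generated by ${\bf h}$, and let $H$ be the associated Hankel matrix of $\mathcal{H}$. If $H$ has no negative (resp. no non-positive, no positive, no nonnegative) eigenvalues, then $\mathcal{H}$ has no negative (resp. no non-positive, no positive, no nonnegative) H-eigenvalues.
   Context: The Hankel tensor generated by ${\bf h}=(h_0,\dots,h_{m(n-1)})$ has entries $\mathcal{H}_{i_1\dots i_m}=h_{i_1+\dots+i_m}$, $0\le i_j\le n-1$; its associated Hankel matrix is the square matrix $H$ with $H_{ij}=h_{i+j}$, $0\le i,j\le m(n-1)/2$. For a real $m^{\rm th}$-order $n$-dimensional tensor $\mathcal{T}$, $(\mathcal{T}{\bf x}^{m-1})_i=\sum_{i_2,\dots,i_m}\mathcal{T}_{i i_2\dots i_m}x_{i_2}\cdots x_{i_m}$, and a real number $\lambda$ is an H-eigenvalue of $\mathcal{T}$ if there is a nonzero ${\bf x}\in\mathbb{R}^n$ with $\mathcal{T}{\bf x}^{m-1}=\lambda{\bf x}^{[m-1]}$, ${\bf x}^{[m-1]}=(x_1^{m-1},\dots,x_n^{m-1})^\top$. *)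

theory Defs
  imports Complex_Main "Jordan_Normal_Form.Char_Poly"
begin

text \<open>A real m-th order n-dimensional tensor is represented as a function from index
  lists (of length m, entries in {0..<n}) to reals; vectors in R^n as functions
  nat => real, of which only the entries at indices < n matter. Indices are 0-based.\<close>

definition tensor_apply :: "nat \<Rightarrow> nat \<Rightarrow> (nat list \<Rightarrow> real) \<Rightarrow> (nat \<Rightarrow> real) \<Rightarrow> nat \<Rightarrow> real" where
  "tensor_apply m n T x i =
     (\<Sum>js \<in> {js. length js = m - 1 \<and> set js \<subseteq> {..<n}}. T (i # js) * prod_list (map x js))"

definition H_eigenvalue :: "nat \<Rightarrow> nat \<Rightarrow> (nat list \<Rightarrow> real) \<Rightarrow> real \<Rightarrow> bool" where
  "H_eigenvalue m n T lam \<longleftrightarrow>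
     (\<exists>x :: nat \<Rightarrow> real. (\<exists>i<n. x i \<noteq> 0) \<and>
        (\<forall>i<n. tensor_apply m n T x i = lam * x i ^ (m - 1)))"

definition hankel_tensor :: "(nat \<Rightarrow> real) \<Rightarrow> nat list \<Rightarrow> real" where
  "hankel_tensor h is = h (sum_list is)"

definition hankel_matrix :: "nat \<Rightarrow> nat \<Rightarrow> (nat \<Rightarrow> real) \<Rightarrow> real mat" where
  "hankel_matrix m n h = mat (m * (n - 1) div 2 + 1) (m * (n - 1) div 2 + 1) (\<lambda>(i, j). h (i + j))"

end

theory Submission
  imports Defs "HOL-Analysis.Function_Topology"
begin

text \<open>
  Write \<open>p\<^sub>x(t) = \<Sum>\<^sub>i x\<^sub>i t\<^sup>i\<close>. Contracting a Hankel tensor generated by \<open>f\<close> \<open>r\<close> times with \<open>x\<close>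
  gives \<open>\<Sum>\<^sub>k f\<^sub>k [t\<^sup>k] p\<^sub>x\<^sup>r\<close>, so splitting \<open>p\<^sub>x\<^sup>2\<^sup>s = p\<^sub>x\<^sup>s p\<^sub>x\<^sup>s\<close> turns contractions into values
  \<open>c\<^sup>T H c'\<close> of the Hankel matrix on coefficient vectors. For even \<open>m = 2s\<close> this gives
  \<open>\<lambda> \<Sum>\<^sub>i x\<^sub>i\<^sup>m = c\<^sup>T H c\<close>, \<open>c\<close> the coefficients of \<open>p\<^sub>x\<^sup>s\<close>. For odd \<open>m = 2s + 1\<close> (so that
  \<open>n - 1 = 2e\<close>) the entry \<open>j + j'\<close> of \<open>\<H>x\<^sup>m\<^sup>-\<^sup>1\<close>, \<open>j, j' \<le> e\<close>, is \<open>w\<^sub>j\<^sup>T H w\<^sub>j\<^sub>'\<close> with \<open>w\<^sub>j\<close> the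
  coefficients of \<open>t\<^sup>j p\<^sub>x\<^sup>s\<close>. Either way a semidefinite (definite) \<open>H\<close> forbids negative
  (non-positive) H-eigenvalues, and \<open>H\<close> is semidefinite (definite) when its smallest
  eigenvalue, the minimum of the Rayleigh quotient, is \<open>\<ge> 0\<close> (\<open>> 0\<close>). The statements about
  positive eigenvalues follow by replacing \<open>h\<close> with \<open>-h\<close>.
\<close>

section \<open>Quadratic forms and eigenvalues of symmetric matrices\<close>

definition bilinear_form :: "nat \<Rightarrow> (nat \<Rightarrow> nat \<Rightarrow> real) \<Rightarrow> (nat \<Rightarrow> real) \<Rightarrow> (nat \<Rightarrow> real) \<Rightarrow> real" where
  "bilinear_form K A u v = (\<Sum>i<K. \<Sum>j<K. A i j * u i * v j)"

lemma bilinear_form_commute: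
  assumes "\<And>i j. A i j = A j i"
  shows "bilinear_form K A u v = bilinear_form K A v u"
  unfolding bilinear_form_def by (subst sum.swap) (simp add: assms algebra_simps)

lemma bilinear_form_add_scaled:
  "bilinear_form K A (\<lambda>i. v i + t * u i) (\<lambda>i. v i + t * u i)
     = bilinear_form K A v v + t * (bilinear_form K A u v + bilinear_form K A v u)
       + t\<^sup>2 * bilinear_form K A u u"
  unfolding bilinear_form_def
  by (simp add: sum.distrib sum_distrib_left power2_eq_square algebra_simps)

lemma bilinear_form_scale:
  "bilinear_form K A (\<lambda>i. c * u i) (\<lambda>i. c * u i) = c\<^sup>2 * bilinear_form K A u u"
  unfolding bilinear_form_def
  by (simp add: sum_distrib_left power2_eq_square algebra_simps)

lemma bilinear_form_cong:
  assumes "\<And>i. i < K \<Longrightarrow> u i = u' i"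
  shows "bilinear_form K A u u = bilinear_form K A u' u'"
  unfolding bilinear_form_def using assms by (intro sum.cong) auto

lemma bilinear_form_diag_shift:
  "bilinear_form K (\<lambda>i j. A i j - \<mu> * (if i = j then 1 else 0)) u v
     = bilinear_form K A u v - \<mu> * (\<Sum>i<K. u i * v i)"
proof -
  have "(\<Sum>j<K. \<mu> * (if i = j then 1 else 0) * u i * v j) = \<mu> * (u i * v i)" if "i < K" for i
  proof -
    have "(\<Sum>j<K. \<mu> * (if i = j then 1 else 0) * u i * v j) = (\<Sum>j<K. if j = i then \<mu> * (u i * v j) else 0)"
      by (rule sum.cong) auto
    then show ?thesis using that by simp
  qed
  then show ?thesis
    unfolding bilinear_form_def
    by (simp add: left_diff_distrib sum_subtractf sum_distrib_left)
qed

lemma bilinear_form_unit_right: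
  assumes "k < K"
  shows "bilinear_form K A u (\<lambda>j. if j = k then 1 else 0) = (\<Sum>i<K. A i k * u i)"
  unfolding bilinear_form_def using assms
  by (simp add: if_distrib mult.commute cong: if_cong)

lemma affine_nonneg_imp_slope_zero:
  fixes a b :: real
  assumes "\<And>t. 0 \<le> a + t * b"
  shows "b = 0"
proof (rule ccontr)
  assume "b \<noteq> 0"
  have "0 \<le> a + (- (\<bar>a\<bar> + 1) / b) * b" by (rule assms)
  also have "\<dots> = a - \<bar>a\<bar> - 1" using \<open>b \<noteq> 0\<close> by simp
  finally show False by linarith
qed

lemma psd_bilinear_form_zero:
  assumes A_sym: "\<And>i j. A i j = A j i"
    and psd: "\<And>w. 0 \<le> bilinear_form K A w w"
    and zero: "bilinear_form K A u u = 0"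
  shows "bilinear_form K A u v = 0"
proof -
  have "0 \<le> bilinear_form K A v v + t * (2 * bilinear_form K A u v)" for t
    using psd[of "\<lambda>i. v i + t * u i"]
    unfolding bilinear_form_add_scaled zero
      bilinear_form_commute[where A = A, OF A_sym, where u = v and v = u] by simp
  then show ?thesis using affine_nonneg_imp_slope_zero by fastforce
qed

lemma sum_even_powers_pos:
  fixes u :: "nat \<Rightarrow> real"
  assumes "even p" and "p > 0" and "\<exists>i<K. u i \<noteq> 0"
  shows "0 < (\<Sum>i<K. u i ^ p)"
proof -
  from assms(3) obtain i where "i < K" "u i \<noteq> 0" by blast
  then show ?thesis
    using assms(1,2) by (intro sum_pos2[where i = i]) (auto simp: zero_le_even_power zero_less_power_eq)
qed

text \<open>The unit sphere is compact in the product topology once the coordinates \<open>\<ge> K\<close>,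
  which the form does not see, are fixed to \<open>0\<close>.\<close>

lemma bilinear_form_attains_min_on_unit_sphere:
  assumes "K > 0"
  obtains v where "(\<Sum>i<K. v i ^ 2) = 1"
    and "\<And>u. (\<Sum>i<K. u i ^ 2) = 1 \<Longrightarrow> bilinear_form K A v v \<le> bilinear_form K A u u"
proof -
  define Q where "Q u = bilinear_form K A u u" for u
  define N where "N u = (\<Sum>i<K. u i ^ 2)" for u :: "nat \<Rightarrow> real"
  define X where "X = product_topology (\<lambda>_::nat. euclideanreal) UNIV"
  define C where "C = PiE UNIV (\<lambda>i. if i < K then {-1..1::real} else {0})"
  define S where "S = C \<inter> {u \<in> topspace X. N u \<in> {1}}"
  have "continuous_map X euclideanreal N"
    unfolding N_def X_def by (intro continuous_intros) auto
  then have "closedin X {u \<in> topspace X. N u \<in> {1}}"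
    by (rule closedin_continuous_map_preimage) auto
  moreover have "compactin X C"
    unfolding X_def C_def by (subst compactin_PiE) auto
  ultimately have "compactin X S"
    unfolding S_def using compact_Int_closedin by blast
  moreover have "continuous_map X euclideanreal Q"
    unfolding Q_def bilinear_form_def X_def by (intro continuous_intros) auto
  ultimately have compact: "compact (Q ` S)"
    using image_compactin by fastforce
  have S_iff: "u \<in> S \<longleftrightarrow> (\<forall>i. if i < K then \<bar>u i\<bar> \<le> 1 else u i = 0) \<and> N u = 1" for u
    unfolding S_def C_def X_def by (auto simp: PiE_def Pi_def abs_le_iff split: if_splits)
  have "(\<Sum>i<K. (if i = 0 then 1 else 0 :: real) ^ 2) = (\<Sum>i<K. if i = 0 then 1 else 0)"
    by (rule sum.cong) auto
  then have "(\<lambda>i. if i = 0 then 1 else 0) \<in> S"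
    using \<open>K > 0\<close> unfolding S_iff N_def by simp
  then obtain v where v: "v \<in> S" and min: "\<And>u. u \<in> S \<Longrightarrow> Q v \<le> Q u"
    using compact_attains_inf[OF compact] by blast
  show thesis
  proof
    show "(\<Sum>i<K. v i ^ 2) = 1" using v unfolding S_iff N_def by simp
  next
    fix u :: "nat \<Rightarrow> real" assume u: "(\<Sum>i<K. u i ^ 2) = 1"
    define u' where "u' i = (if i < K then u i else 0)" for i
    have "N u' = 1" using u unfolding N_def u'_def by simp
    moreover have "\<bar>u i\<bar> \<le> 1" if "i < K" for i
    proof -
      have "u i ^ 2 \<le> 1" using u member_le_sum[of i "{..<K}" "\<lambda>i. u i ^ 2"] that by simp
      then show ?thesis by (simp add: abs_square_le_1)
    qed
    ultimately have "u' \<in> S" unfolding S_iff by (auto simp: u'_def)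
    moreover have "Q u' = Q u" unfolding Q_def by (rule bilinear_form_cong) (simp add: u'_def)
    ultimately show "bilinear_form K A v v \<le> bilinear_form K A u u"
      using min unfolding Q_def by metis
  qed
qed

lemma min_on_unit_sphere_bounds_form:
  assumes v: "(\<Sum>i<K. v i ^ 2) = 1"
    and min: "\<And>u. (\<Sum>i<K. u i ^ 2) = 1 \<Longrightarrow> bilinear_form K A v v \<le> bilinear_form K A u u"
  shows "bilinear_form K A v v * (\<Sum>i<K. u i ^ 2) \<le> bilinear_form K A u u"
proof (cases "\<exists>i<K. u i \<noteq> 0")
  case True
  define r where "r = (\<Sum>i<K. u i ^ 2)"
  have "r > 0" unfolding r_def using sum_even_powers_pos[of 2, OF _ _ True] by simp
  have "(\<Sum>i<K. (u i / sqrt r) ^ 2) = 1"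
    using \<open>r > 0\<close> by (simp add: power_divide sum_divide_distrib[symmetric] r_def)
  then have "bilinear_form K A v v \<le> bilinear_form K A (\<lambda>i. (1 / sqrt r) * u i) (\<lambda>i. (1 / sqrt r) * u i)"
    using min by simp
  also have "\<dots> = (1 / sqrt r)\<^sup>2 * bilinear_form K A u u"
    by (rule bilinear_form_scale)
  also have "\<dots> = bilinear_form K A u u / r"
    using \<open>r > 0\<close> by (simp add: power_divide)
  finally show ?thesis using \<open>r > 0\<close> by (simp add: r_def field_simps)
next
  case False
  then have "bilinear_form K A u u = bilinear_form K A (\<lambda>_. 0) (\<lambda>_. 0)"
    by (intro bilinear_form_cong) auto
  with False show ?thesis by (simp add: bilinear_form_def)
qed

text \<open>At a minimiser \<open>v\<close> of the Rayleigh quotient the form of \<open>A - \<mu>I\<close> is positive semidefinite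
  and vanishes at \<open>v\<close>, so \<open>v\<close> lies in its radical: \<open>(A - \<mu>I) v = 0\<close>.\<close>

lemma rayleigh_minimizer_eigenvector:
  assumes A_sym: "\<And>i j. A i j = A j i"
    and lower: "\<And>u. \<mu> * (\<Sum>i<K. u i ^ 2) \<le> bilinear_form K A u u"
    and attained: "\<mu> * (\<Sum>i<K. v i ^ 2) = bilinear_form K A v v"
    and "k < K"
  shows "(\<Sum>j<K. A k j * v j) = \<mu> * v k"
proof -
  define A' where "A' i j = A i j - \<mu> * (if i = j then 1 else 0)" for i j
  define e where "e j = (if j = k then 1 else 0 :: real)" for j
  have shift: "bilinear_form K A' u w = bilinear_form K A u w - \<mu> * (\<Sum>i<K. u i * w i)" for u w
    unfolding A'_def by (rule bilinear_form_diag_shift)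
  have "A' i j = A' j i" for i j
    unfolding A'_def using A_sym[of i j] by auto
  moreover have "0 \<le> bilinear_form K A' u u" for u
    using lower[of u] by (simp add: shift power2_eq_square)
  moreover have "bilinear_form K A' v v = 0"
    using attained by (simp add: shift power2_eq_square)
  ultimately have "bilinear_form K A' v e = 0"
    by (rule psd_bilinear_form_zero)
  moreover have "bilinear_form K A v e = (\<Sum>j<K. A k j * v j)"
    unfolding e_def bilinear_form_unit_right[OF \<open>k < K\<close>]
    by (rule sum.cong) (simp_all add: A_sym[of _ k])
  moreover have "(\<Sum>i<K. v i * e i) = v k"
    using \<open>k < K\<close> by (simp add: e_def if_distrib cong: if_cong)
  ultimately show ?thesis by (simp add: shift)
qed

lemma eigenvalue_mat_of_eigen_equations:
  fixes A :: "nat \<Rightarrow> nat \<Rightarrow> real"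
  assumes nonzero: "\<exists>i<K. v i \<noteq> 0"
    and eigen: "\<And>i. i < K \<Longrightarrow> (\<Sum>j<K. A i j * v j) = \<mu> * v i"
  shows "eigenvalue (mat K K (\<lambda>(i, j). A i j)) \<mu>"
  unfolding eigenvalue_def
proof
  show "eigenvector (mat K K (\<lambda>(i, j). A i j)) (vec K v) \<mu>"
    unfolding eigenvector_def
  proof (intro conjI)
    show "vec K v \<noteq> 0\<^sub>v (dim_row (mat K K (\<lambda>(i, j). A i j)))"
      using nonzero by (auto simp: vec_eq_iff)
    show "mat K K (\<lambda>(i, j). A i j) *\<^sub>v vec K v = \<mu> \<cdot>\<^sub>v vec K v"
      using eigen by (auto simp: mult_mat_vec_def scalar_prod_def atLeast0LessThan)
  qed simp
qed

lemma symmetric_min_eigenvalue: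
  assumes A_sym: "\<And>i j. A i j = A j i" and "K > 0"
  obtains \<mu> where "eigenvalue (mat K K (\<lambda>(i, j). A i j)) \<mu>"
    and "\<And>u. \<mu> * (\<Sum>i<K. u i ^ 2) \<le> bilinear_form K A u u"
proof -
  obtain v where v: "(\<Sum>i<K. v i ^ 2) = 1"
    and min: "\<And>u. (\<Sum>i<K. u i ^ 2) = 1 \<Longrightarrow> bilinear_form K A v v \<le> bilinear_form K A u u"
    using bilinear_form_attains_min_on_unit_sphere[OF \<open>K > 0\<close>] by blast
  define \<mu> where "\<mu> = bilinear_form K A v v"
  have lower: "\<mu> * (\<Sum>i<K. u i ^ 2) \<le> bilinear_form K A u u" for u
    unfolding \<mu>_def using min_on_unit_sphere_bounds_form[OF v min] by simp
  have "\<exists>i<K. v i \<noteq> 0"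
  proof (rule ccontr)
    assume "\<not> (\<exists>i<K. v i \<noteq> 0)"
    then have "(\<Sum>i<K. v i ^ 2) = 0" by simp
    with v show False by simp
  qed
  moreover have "(\<Sum>j<K. A i j * v j) = \<mu> * v i" if "i < K" for i
    by (rule rayleigh_minimizer_eigenvector[where A = A, OF A_sym lower _ that]) (simp add: v \<mu>_def)
  ultimately have "eigenvalue (mat K K (\<lambda>(i, j). A i j)) \<mu>"
    by (rule eigenvalue_mat_of_eigen_equations)
  then show thesis using lower by (rule that)
qed

lemma symmetric_form_nonneg:
  assumes A_sym: "\<And>i j. A i j = A j i"
    and no_neg: "\<forall>\<mu>. eigenvalue (mat K K (\<lambda>(i, j). A i j)) \<mu> \<longrightarrow> \<not> \<mu> < 0"
  shows "0 \<le> bilinear_form K A u u"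
proof (cases "K = 0")
  case False
  then have "K > 0" by simp
  obtain \<mu> where "eigenvalue (mat K K (\<lambda>(i, j). A i j)) \<mu>"
    and lower: "\<And>u. \<mu> * (\<Sum>i<K. u i ^ 2) \<le> bilinear_form K A u u"
    using symmetric_min_eigenvalue[where A = A, OF A_sym \<open>K > 0\<close>] by blast
  with no_neg have "0 \<le> \<mu>" by (meson not_less)
  then have "0 \<le> \<mu> * (\<Sum>i<K. u i ^ 2)" by (simp add: sum_nonneg)
  with lower[of u] show ?thesis by linarith
qed (simp add: bilinear_form_def)

lemma symmetric_form_pos:
  assumes A_sym: "\<And>i j. A i j = A j i"
    and no_nonpos: "\<forall>\<mu>. eigenvalue (mat K K (\<lambda>(i, j). A i j)) \<mu> \<longrightarrow> \<not> \<mu> \<le> 0"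
    and u: "\<exists>i<K. u i \<noteq> 0"
  shows "0 < bilinear_form K A u u"
proof -
  have "K > 0" using u by auto
  obtain \<mu> where "eigenvalue (mat K K (\<lambda>(i, j). A i j)) \<mu>"
    and lower: "\<And>u. \<mu> * (\<Sum>i<K. u i ^ 2) \<le> bilinear_form K A u u"
    using symmetric_min_eigenvalue[where A = A, OF A_sym \<open>K > 0\<close>] by blast
  with no_nonpos have "0 < \<mu>" by (meson not_less)
  then have "0 < \<mu> * (\<Sum>i<K. u i ^ 2)" using sum_even_powers_pos[of 2, OF _ _ u] by simp
  with lower[of u] show ?thesis by linarith
qed

lemma eigenvalue_uminus_mat:
  fixes A :: "real mat"
  assumes "A \<in> carrier_mat K K" and "eigenvalue (- A) \<mu>"
  shows "eigenvalue A (- \<mu>)"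
proof -
  from assms obtain v where v: "v \<in> carrier_vec K" "v \<noteq> 0\<^sub>v K" "- A *\<^sub>v v = \<mu> \<cdot>\<^sub>v v"
    unfolding eigenvalue_def eigenvector_def by auto
  have "A *\<^sub>v v = - (- A *\<^sub>v v)" using assms(1) v(1) by simp
  also have "\<dots> = (- \<mu>) \<cdot>\<^sub>v v" using v(3) by (auto simp: vec_eq_iff)
  finally show ?thesis
    using assms(1) v unfolding eigenvalue_def eigenvector_def by auto
qed

section \<open>Hankel tensor contractions as polynomial coefficients\<close>

definition index_lists :: "nat \<Rightarrow> nat \<Rightarrow> nat list set" where
  "index_lists n r = {js. length js = r \<and> set js \<subseteq> {..<n}}"

definition hankel_contraction :: "nat \<Rightarrow> (nat \<Rightarrow> real) \<Rightarrow> nat \<Rightarrow> (nat \<Rightarrow> real) \<Rightarrow> real" where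
  "hankel_contraction n x r f = (\<Sum>js\<in>index_lists n r. f (sum_list js) * prod_list (map x js))"

definition coeff_pairing :: "nat \<Rightarrow> (nat \<Rightarrow> real) \<Rightarrow> real poly \<Rightarrow> real" where
  "coeff_pairing D f P = (\<Sum>k<D. f k * coeff P k)"

definition vec_poly :: "nat \<Rightarrow> (nat \<Rightarrow> real) \<Rightarrow> real poly" where
  "vec_poly n x = (\<Sum>i<n. monom (x i) i)"

lemma index_lists_0: "index_lists n 0 = {[]}"
  unfolding index_lists_def by auto

lemma index_lists_Suc: "index_lists n (Suc r) = (\<lambda>(i, js). i # js) ` ({..<n} \<times> index_lists n r)"
  unfolding index_lists_def by (auto simp: length_Suc_conv image_iff)

lemma hankel_contraction_0: "hankel_contraction n x 0 f = f 0"
  unfolding hankel_contraction_def index_lists_0 by simp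

lemma hankel_contraction_Suc:
  "hankel_contraction n x (Suc r) f = (\<Sum>i<n. x i * hankel_contraction n x r (\<lambda>k. f (i + k)))"
proof -
  have inj: "inj_on (\<lambda>(i, js). i # js) ({..<n} \<times> index_lists n r)"
    by (auto simp: inj_on_def)
  have "hankel_contraction n x (Suc r) f
      = (\<Sum>(i, js)\<in>{..<n} \<times> index_lists n r. f (i + sum_list js) * (x i * prod_list (map x js)))"
    unfolding hankel_contraction_def index_lists_Suc
    by (subst sum.reindex[OF inj]) (auto intro!: sum.cong)
  also have "\<dots> = (\<Sum>i<n. \<Sum>js\<in>index_lists n r. f (i + sum_list js) * (x i * prod_list (map x js)))"
    by (subst sum.cartesian_product) auto
  also have "\<dots> = (\<Sum>i<n. x i * hankel_contraction n x r (\<lambda>k. f (i + k)))"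
    unfolding hankel_contraction_def by (simp add: sum_distrib_left algebra_simps)
  finally show ?thesis .
qed

lemma hankel_contraction_add:
  "hankel_contraction n x (a + b) f
     = hankel_contraction n x a (\<lambda>k. hankel_contraction n x b (\<lambda>l. f (k + l)))"
proof (induction a arbitrary: f)
  case 0
  then show ?case by (simp add: hankel_contraction_0)
next
  case (Suc a)
  then show ?case by (simp add: hankel_contraction_Suc add.assoc)
qed

lemma tensor_apply_hankel_tensor:
  "tensor_apply m n (hankel_tensor h) x i = hankel_contraction n x (m - 1) (\<lambda>k. h (i + k))"
  unfolding tensor_apply_def hankel_tensor_def hankel_contraction_def index_lists_def by simp

lemma coeff_pairing_sum:
  "finite I \<Longrightarrow> coeff_pairing D f (\<Sum>i\<in>I. P i) = (\<Sum>i\<in>I. coeff_pairing D f (P i))"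
  unfolding coeff_pairing_def coeff_sum by (simp add: sum_distrib_left sum.swap[of _ I])

lemma coeff_pairing_degree_cong:
  assumes "degree P < D" "degree P < D'"
  shows "coeff_pairing D f P = coeff_pairing D' f P"
proof -
  have "coeff_pairing E f P = (\<Sum>k\<le>degree P. f k * coeff P k)" if "degree P < E" for E
    unfolding coeff_pairing_def
    by (rule sum.mono_neutral_left[symmetric]) (use that in \<open>auto simp: coeff_eq_0\<close>)
  then show ?thesis using assms by simp
qed

lemma coeff_pairing_monom_mult:
  "coeff_pairing (D + j) f (monom c j * P) = c * coeff_pairing D (\<lambda>k. f (j + k)) P"
proof -
  have split: "{..<D + j} = {..<j} \<union> {0 + j..<D + j}" by auto
  have "coeff_pairing (D + j) f (monom c j * P) = (\<Sum>k\<in>{0 + j..<D + j}. f k * (c * coeff P (k - j)))"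
    unfolding coeff_pairing_def coeff_monom_mult split by (subst sum.union_disjoint) auto
  also have "\<dots> = (\<Sum>k\<in>{0..<D}. f (k + j) * (c * coeff P k))"
    by (subst sum.shift_bounds_nat_ivl) simp
  also have "\<dots> = c * coeff_pairing D (\<lambda>k. f (j + k)) P"
    unfolding coeff_pairing_def by (simp add: sum_distrib_left atLeast0LessThan algebra_simps)
  finally show ?thesis .
qed

lemma degree_monom_mult_le: "degree (monom c j * P) \<le> j + degree P"
  using degree_mult_le[of "monom c j" P] degree_monom_le[of c j] by linarith

lemma coeff_pairing_shift:
  assumes "degree P < D" and "D + j \<le> K"
  shows "coeff_pairing D (\<lambda>k. f (j + k)) P = coeff_pairing K f (monom 1 j * P)"
proof -
  have "coeff_pairing D (\<lambda>k. f (j + k)) P = coeff_pairing (D + j) f (monom 1 j * P)"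
    by (simp add: coeff_pairing_monom_mult)
  also have "\<dots> = coeff_pairing K f (monom 1 j * P)"
    using degree_monom_mult_le[of 1 j P] assms by (intro coeff_pairing_degree_cong) auto
  finally show ?thesis .
qed

lemma coeff_vec_poly: "coeff (vec_poly n x) k = (if k < n then x k else 0)"
  unfolding vec_poly_def coeff_sum by (simp add: coeff_monom)

lemma degree_vec_poly_power: "degree (vec_poly n x ^ r) \<le> r * (n - 1)"
proof -
  have "degree (vec_poly n x) \<le> n - 1"
    unfolding vec_poly_def
    by (rule degree_sum_le) (auto intro: order.trans[OF degree_monom_le])
  then show ?thesis
    using degree_power_le[of "vec_poly n x" r] by (metis le_trans mult.commute mult_le_mono1)
qed

lemma vec_poly_power_nonzero_coeff:
  assumes "\<exists>i<n. x i \<noteq> 0"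
  shows "coeff (vec_poly n x ^ r) (degree (vec_poly n x ^ r)) \<noteq> 0"
proof -
  have "vec_poly n x \<noteq> 0"
    using assms coeff_vec_poly[of n x] by (metis coeff_0)
  then show ?thesis by simp
qed

lemma hankel_contraction_eq_coeff_pairing:
  "hankel_contraction n x r f = coeff_pairing (r * (n - 1) + 1) f (vec_poly n x ^ r)"
proof (induction r arbitrary: f)
  case 0
  then show ?case by (simp add: hankel_contraction_0 coeff_pairing_def)
next
  case (Suc r)
  define D where "D = r * (n - 1) + 1"
  define D' where "D' = Suc r * (n - 1) + 1"
  have "x i * coeff_pairing D (\<lambda>k. f (i + k)) (vec_poly n x ^ r)
      = coeff_pairing D' f (monom (x i) i * vec_poly n x ^ r)" if "i < n" for i
  proof -
    have "degree (monom (x i) i * vec_poly n x ^ r) \<le> i + r * (n - 1)"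
      using degree_monom_mult_le[of "x i" i "vec_poly n x ^ r"] degree_vec_poly_power[of n x r] by linarith
    then have "coeff_pairing (D + i) f (monom (x i) i * vec_poly n x ^ r)
        = coeff_pairing D' f (monom (x i) i * vec_poly n x ^ r)"
      using that by (intro coeff_pairing_degree_cong) (auto simp: D_def D'_def)
    then show ?thesis by (simp add: coeff_pairing_monom_mult)
  qed
  then have "hankel_contraction n x (Suc r) f = (\<Sum>i<n. coeff_pairing D' f (monom (x i) i * vec_poly n x ^ r))"
    unfolding hankel_contraction_Suc Suc.IH D_def[symmetric] by simp
  also have "\<dots> = coeff_pairing D' f (vec_poly n x ^ Suc r)"
    by (simp add: coeff_pairing_sum[symmetric] vec_poly_def sum_distrib_right)
  finally show ?case unfolding D'_def .
qed

lemma coeff_pairing_hankel: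
  "coeff_pairing K (\<lambda>a. coeff_pairing K (\<lambda>b. h (a + b)) V) U
     = bilinear_form K (\<lambda>i j. h (i + j)) (coeff U) (coeff V)"
  unfolding coeff_pairing_def bilinear_form_def
  by (simp add: sum_distrib_left sum_distrib_right algebra_simps)

section \<open>Hankel tensor contractions as values of the Hankel form\<close>

lemma H_eigenpair_energy_even:
  fixes n :: nat and x :: "nat \<Rightarrow> real"
  assumes m: "m = 2 * s" and "s \<ge> 1"
    and eigen: "\<And>i. i < n \<Longrightarrow> tensor_apply m n (hankel_tensor h) x i = lam * x i ^ (m - 1)"
  shows "lam * (\<Sum>i<n. x i ^ m) = bilinear_form (m * (n - 1) div 2 + 1) (\<lambda>i j. h (i + j))
           (coeff (vec_poly n x ^ s)) (coeff (vec_poly n x ^ s))"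
proof -
  have "m = Suc (m - 1)" using m \<open>s \<ge> 1\<close> by simp
  then have "x i * x i ^ (m - 1) = x i ^ m" for i by (metis power_Suc)
  then have "x i * tensor_apply m n (hankel_tensor h) x i = lam * x i ^ m" if "i < n" for i
    using eigen[OF that] by (simp add: mult.left_commute)
  then have "lam * (\<Sum>i<n. x i ^ m) = (\<Sum>i<n. x i * tensor_apply m n (hankel_tensor h) x i)"
    by (simp add: sum_distrib_left)
  also have "\<dots> = hankel_contraction n x (Suc (m - 1)) h"
    unfolding hankel_contraction_Suc tensor_apply_hankel_tensor by simp
  also have "\<dots> = hankel_contraction n x (s + s) h"
    using m \<open>s \<ge> 1\<close> by (simp add: mult_2)
  also have "\<dots> = bilinear_form (s * (n - 1) + 1) (\<lambda>i j. h (i + j))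
      (coeff (vec_poly n x ^ s)) (coeff (vec_poly n x ^ s))"
    unfolding hankel_contraction_add unfolding hankel_contraction_eq_coeff_pairing coeff_pairing_hankel ..
  also have "s * (n - 1) + 1 = m * (n - 1) div 2 + 1"
    using m by simp
  finally show ?thesis .
qed

lemma hankel_tensor_apply_odd:
  fixes n :: nat and x :: "nat \<Rightarrow> real"
  assumes "m = 2 * s + 1" and "n - 1 = 2 * e" and "j \<le> e" and "j' \<le> e"
  defines "P \<equiv> vec_poly n x ^ s"
  shows "tensor_apply m n (hankel_tensor h) x (j + j')
       = bilinear_form (m * (n - 1) div 2 + 1) (\<lambda>i j. h (i + j))
           (coeff (monom 1 j * P)) (coeff (monom 1 j' * P))"
proof -
  define D where "D = s * (n - 1) + 1"
  define K where "K = m * (n - 1) div 2 + 1"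
  have "D = 2 * s * e + 1" unfolding D_def assms(2) by (simp add: ac_simps)
  moreover have "K = 2 * s * e + e + 1" unfolding K_def assms(1,2) by (simp add: algebra_simps)
  moreover have "degree P < D"
    using degree_vec_poly_power[of n x s] unfolding P_def D_def by simp
  ultimately have shift: "coeff_pairing D (\<lambda>k. f (i + k)) P = coeff_pairing K f (monom 1 i * P)"
    if "i \<le> e" for f i
    using that by (intro coeff_pairing_shift) auto
  have "tensor_apply m n (hankel_tensor h) x (j + j')
      = hankel_contraction n x (s + s) (\<lambda>k. h (j + j' + k))"
    unfolding tensor_apply_hankel_tensor using assms(1) by (simp add: mult_2)
  also have "\<dots> = coeff_pairing D (\<lambda>a. coeff_pairing D (\<lambda>b. h (j + j' + (a + b))) P) P"
    unfolding hankel_contraction_add unfolding hankel_contraction_eq_coeff_pairing P_def D_def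
    by (simp add: add.assoc)
  also have "\<dots> = coeff_pairing D (\<lambda>a. coeff_pairing K (\<lambda>b. h (j + a + b)) (monom 1 j' * P)) P"
  proof -
    have "coeff_pairing D (\<lambda>b. h (j + j' + (a + b))) P
        = coeff_pairing K (\<lambda>b. h (j + a + b)) (monom 1 j' * P)" for a
      using shift[OF assms(4), of "\<lambda>b. h (j + a + b)"] by (simp add: ac_simps)
    then show ?thesis by simp
  qed
  also have "\<dots> = coeff_pairing K (\<lambda>a. coeff_pairing K (\<lambda>b. h (a + b)) (monom 1 j' * P)) (monom 1 j * P)"
    using shift[OF assms(3), of "\<lambda>a. coeff_pairing K (\<lambda>b. h (a + b)) (monom 1 j' * P)"] by simp
  finally show ?thesis unfolding coeff_pairing_hankel K_def .
qed

text \<open>For odd \<open>m\<close> the diagonal entries \<open>\<lambda> x\<^sub>2\<^sub>j\<^sup>m\<^sup>-\<^sup>1 = w\<^sub>j\<^sup>T H w\<^sub>j\<close> are \<open>\<le> 0\<close>, hence \<open>0\<close>;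
  semidefiniteness then kills every entry \<open>w\<^sub>j\<^sup>T H w\<^sub>j\<^sub>'\<close>.\<close>

lemma H_eigenvector_zero_if_psd_odd:
  fixes n :: nat and x :: "nat \<Rightarrow> real"
  assumes m: "m = 2 * s + 1" and e: "n - 1 = 2 * e"
    and psd: "\<And>u. 0 \<le> bilinear_form (m * (n - 1) div 2 + 1) (\<lambda>i j. h (i + j)) u u"
    and eigen: "\<And>i. i < n \<Longrightarrow> tensor_apply m n (hankel_tensor h) x i = lam * x i ^ (m - 1)"
    and "lam < 0" and "i < n"
  shows "x i = 0"
proof -
  define W where "W j = coeff (monom 1 j * vec_poly n x ^ s)" for j
  define B where "B = bilinear_form (m * (n - 1) div 2 + 1) (\<lambda>i j. h (i + j))"
  have entry: "tensor_apply m n (hankel_tensor h) x (j + j') = B (W j) (W j')"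
    if "j \<le> e" "j' \<le> e" for j j'
    unfolding W_def B_def using hankel_tensor_apply_odd[OF m e that] .
  have diag_zero: "B (W j) (W j) = 0" if "j \<le> e" for j
  proof -
    have "j + j < n" using that e \<open>i < n\<close> by linarith
    then have "B (W j) (W j) = lam * x (j + j) ^ (m - 1)"
      using entry[OF that that] eigen by simp
    also have "\<dots> \<le> 0"
      using \<open>lam < 0\<close> m by (simp add: mult_nonpos_nonneg zero_le_even_power)
    finally show ?thesis using psd[of "W j"] unfolding B_def by linarith
  qed
  have le: "i div 2 \<le> e" "i - i div 2 \<le> e" using \<open>i < n\<close> e by linarith+
  have "lam * x i ^ (m - 1) = B (W (i div 2)) (W (i - i div 2))"
    using eigen[OF \<open>i < n\<close>] entry[OF le] le by simp
  also have "\<dots> = 0"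
    unfolding B_def
    by (rule psd_bilinear_form_zero[OF _ psd diag_zero[OF le(1), unfolded B_def]]) (simp add: add.commute)
  finally show ?thesis using \<open>lam < 0\<close> by simp
qed

lemma H_eigenvalue_nonneg_if_psd:
  assumes "m \<ge> 2" and "n \<ge> 1" and "even (m * (n - 1))"
    and psd: "\<And>u. 0 \<le> bilinear_form (m * (n - 1) div 2 + 1) (\<lambda>i j. h (i + j)) u u"
    and "H_eigenvalue m n (hankel_tensor h) lam"
  shows "0 \<le> lam"
proof (rule ccontr)
  assume "\<not> 0 \<le> lam"
  obtain x where nonzero: "\<exists>i<n. x i \<noteq> 0"
    and eigen: "\<And>i. i < n \<Longrightarrow> tensor_apply m n (hankel_tensor h) x i = lam * x i ^ (m - 1)"
    using assms(5) unfolding H_eigenvalue_def by blast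
  define s where "s = m div 2"
  have s: "m = 2 * s \<or> m = 2 * s + 1" and "s \<ge> 1"
    unfolding s_def using \<open>m \<ge> 2\<close> by presburger+
  show False
  proof (cases "even m")
    case True
    then have m: "m = 2 * s" using s by auto
    have "0 \<le> lam * (\<Sum>i<n. x i ^ m)"
      using H_eigenpair_energy_even[OF m \<open>s \<ge> 1\<close> eigen] psd by simp
    moreover have "0 < (\<Sum>i<n. x i ^ m)"
      using sum_even_powers_pos[OF True _ nonzero] \<open>m \<ge> 2\<close> by simp
    ultimately show False using \<open>\<not> 0 \<le> lam\<close> by (simp add: zero_le_mult_iff)
  next
    case False
    then have m: "m = 2 * s + 1" using s by auto
    have "even (n - 1)" using \<open>even (m * (n - 1))\<close> False by simp
    then obtain e where e: "n - 1 = 2 * e" ..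
    have "x i = 0" if "i < n" for i
      using H_eigenvector_zero_if_psd_odd[OF m e psd eigen _ that] \<open>\<not> 0 \<le> lam\<close> by simp
    then show False using nonzero by auto
  qed
qed

lemma H_eigenvalue_pos_if_pd:
  assumes "m \<ge> 2" and "n \<ge> 1" and "even (m * (n - 1))"
    and pd: "\<And>u. \<exists>i < m * (n - 1) div 2 + 1. u i \<noteq> 0 \<Longrightarrow>
               0 < bilinear_form (m * (n - 1) div 2 + 1) (\<lambda>i j. h (i + j)) u u"
    and "H_eigenvalue m n (hankel_tensor h) lam"
  shows "0 < lam"
proof -
  obtain x where nonzero: "\<exists>i<n. x i \<noteq> 0"
    and eigen: "\<And>i. i < n \<Longrightarrow> tensor_apply m n (hankel_tensor h) x i = lam * x i ^ (m - 1)"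
    using assms(5) unfolding H_eigenvalue_def by blast
  define s where "s = m div 2"
  have s: "m = 2 * s \<or> m = 2 * s + 1" and "s \<ge> 1"
    unfolding s_def using \<open>m \<ge> 2\<close> by presburger+
  define P where "P = vec_poly n x ^ s"
  have "\<exists>i < m * (n - 1) div 2 + 1. coeff P i \<noteq> 0"
  proof -
    have "2 * (s * (n - 1)) \<le> m * (n - 1)" using s by auto
    then have "degree P < m * (n - 1) div 2 + 1"
      using degree_vec_poly_power[of n x s] unfolding P_def by linarith
    then show ?thesis using vec_poly_power_nonzero_coeff[OF nonzero] unfolding P_def by blast
  qed
  then have pos: "0 < bilinear_form (m * (n - 1) div 2 + 1) (\<lambda>i j. h (i + j)) (coeff P) (coeff P)"
    by (rule pd)
  show ?thesis
  proof (cases "even m")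
    case True
    then have m: "m = 2 * s" using s by auto
    have "0 < lam * (\<Sum>i<n. x i ^ m)"
      using H_eigenpair_energy_even[OF m \<open>s \<ge> 1\<close> eigen] pos unfolding P_def by simp
    moreover have "0 < (\<Sum>i<n. x i ^ m)"
      using sum_even_powers_pos[OF True _ nonzero] \<open>m \<ge> 2\<close> by simp
    ultimately show ?thesis by (simp add: zero_less_mult_iff)
  next
    case False
    then have m: "m = 2 * s + 1" using s by auto
    have "even (n - 1)" using \<open>even (m * (n - 1))\<close> False by simp
    then obtain e where e: "n - 1 = 2 * e" ..
    have "lam * x 0 ^ (m - 1) = tensor_apply m n (hankel_tensor h) x (0 + 0)"
      using eigen \<open>n \<ge> 1\<close> by simp
    also have "\<dots> = bilinear_form (m * (n - 1) div 2 + 1) (\<lambda>i j. h (i + j)) (coeff P) (coeff P)"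
      using hankel_tensor_apply_odd[OF m e, of 0 0, where x = x and h = h] unfolding P_def by simp
    finally have "0 < lam * x 0 ^ (m - 1)" using pos by simp
    then show ?thesis
      using zero_le_even_power[of "m - 1" "x 0"] m by (auto simp: zero_less_mult_iff)
  qed
qed

lemma hankel_matrix_eq_mat:
  "hankel_matrix m n h = mat (m * (n - 1) div 2 + 1) (m * (n - 1) div 2 + 1) (\<lambda>(i, j). h (i + j))"
  unfolding hankel_matrix_def ..

lemma no_negative_H_eigenvalue:
  assumes "m \<ge> 2" and "n \<ge> 1" and "even (m * (n - 1))"
    and "\<forall>\<mu>. eigenvalue (hankel_matrix m n h) \<mu> \<longrightarrow> \<not> \<mu> < 0"
    and "H_eigenvalue m n (hankel_tensor h) lam"
  shows "\<not> lam < 0"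
proof -
  have "0 \<le> bilinear_form (m * (n - 1) div 2 + 1) (\<lambda>i j. h (i + j)) u u" for u
    using assms(4) unfolding hankel_matrix_eq_mat
    by (intro symmetric_form_nonneg) (simp_all add: add.commute)
  then show ?thesis using H_eigenvalue_nonneg_if_psd[OF assms(1-3) _ assms(5)] by simp
qed

lemma no_nonpositive_H_eigenvalue:
  assumes "m \<ge> 2" and "n \<ge> 1" and "even (m * (n - 1))"
    and "\<forall>\<mu>. eigenvalue (hankel_matrix m n h) \<mu> \<longrightarrow> \<not> \<mu> \<le> 0"
    and "H_eigenvalue m n (hankel_tensor h) lam"
  shows "\<not> lam \<le> 0"
proof -
  have "0 < bilinear_form (m * (n - 1) div 2 + 1) (\<lambda>i j. h (i + j)) u u"
    if "\<exists>i < m * (n - 1) div 2 + 1. u i \<noteq> 0" for u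
    using assms(4) that unfolding hankel_matrix_eq_mat
    by (intro symmetric_form_pos) (simp_all add: add.commute)
  then show ?thesis using H_eigenvalue_pos_if_pd[OF assms(1-3) _ assms(5)] by simp
qed

lemma eigenvalue_hankel_matrix_uminus:
  assumes "eigenvalue (hankel_matrix m n (\<lambda>k. - h k)) \<mu>"
  shows "eigenvalue (hankel_matrix m n h) (- \<mu>)"
proof -
  have "hankel_matrix m n (\<lambda>k. - h k) = - hankel_matrix m n h"
    unfolding hankel_matrix_def by (rule eq_matI) auto
  with assms show ?thesis
    by (intro eigenvalue_uminus_mat[where K = "m * (n - 1) div 2 + 1"]) (auto simp: hankel_matrix_def)
qed

lemma H_eigenvalue_hankel_tensor_uminus:
  assumes "H_eigenvalue m n (hankel_tensor h) lam"
  shows "H_eigenvalue m n (hankel_tensor (\<lambda>k. - h k)) (- lam)"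
proof -
  have "tensor_apply m n (hankel_tensor (\<lambda>k. - h k)) x i = - tensor_apply m n (hankel_tensor h) x i"
    for x i
    unfolding tensor_apply_def hankel_tensor_def by (simp add: sum_negf)
  with assms show ?thesis unfolding H_eigenvalue_def by auto
qed

theorem theorem5:
  fixes m n :: nat and h :: "nat \<Rightarrow> real"
  assumes "m \<ge> 2" and "n \<ge> 1" and "even (m * (n - 1))"
  shows "((\<forall>\<mu>. eigenvalue (hankel_matrix m n h) \<mu> \<longrightarrow> \<not> \<mu> < 0) \<longrightarrow>
            (\<forall>lam. H_eigenvalue m n (hankel_tensor h) lam \<longrightarrow> \<not> lam < 0))
       \<and> ((\<forall>\<mu>. eigenvalue (hankel_matrix m n h) \<mu> \<longrightarrow> \<not> \<mu> \<le> 0) \<longrightarrow>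
            (\<forall>lam. H_eigenvalue m n (hankel_tensor h) lam \<longrightarrow> \<not> lam \<le> 0))
       \<and> ((\<forall>\<mu>. eigenvalue (hankel_matrix m n h) \<mu> \<longrightarrow> \<not> \<mu> > 0) \<longrightarrow>
            (\<forall>lam. H_eigenvalue m n (hankel_tensor h) lam \<longrightarrow> \<not> lam > 0))
       \<and> ((\<forall>\<mu>. eigenvalue (hankel_matrix m n h) \<mu> \<longrightarrow> \<not> \<mu> \<ge> 0) \<longrightarrow>
            (\<forall>lam. H_eigenvalue m n (hankel_tensor h) lam \<longrightarrow> \<not> lam \<ge> 0))"
proof (intro conjI impI allI)
  fix lam
  assume "\<forall>\<mu>. eigenvalue (hankel_matrix m n h) \<mu> \<longrightarrow> \<not> \<mu> > 0"
    and "H_eigenvalue m n (hankel_tensor h) lam"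
  then have "\<not> - lam < 0"
    using eigenvalue_hankel_matrix_uminus H_eigenvalue_hankel_tensor_uminus
    by (intro no_negative_H_eigenvalue[OF assms]) force+
  then show "\<not> lam > 0" by simp
next
  fix lam
  assume "\<forall>\<mu>. eigenvalue (hankel_matrix m n h) \<mu> \<longrightarrow> \<not> \<mu> \<ge> 0"
    and "H_eigenvalue m n (hankel_tensor h) lam"
  then have "\<not> - lam \<le> 0"
    using eigenvalue_hankel_matrix_uminus H_eigenvalue_hankel_tensor_uminus
    by (intro no_nonpositive_H_eigenvalue[OF assms]) force+
  then show "\<not> lam \<ge> 0" by simp
qed (use no_negative_H_eigenvalue[OF assms] no_nonpositive_H_eigenvalue[OF assms] in blast)+

end
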